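(* Let $X_n$ be the compactification degree of a simple two-dimensional lattice path chosen uniformly at random among the $4^n$ paths of length $n\ge1$. Then for $r\ge0$, \[ \mathbb{P}(X_n=r)=4^{r+1-n}\sum_{\lambda\ge0}\lambda(-1)^{\lambda-1}\bigg[\binom{2n-1}{n-\lambda2^r}-\binom{2n-1}{n-\lambda2^r-1}\bigg], \] and \[ \mathbb{E}X_n=4^{-n}\sum_{k\ge1}8k\big(2^{v_2(k)}-1\big)\bigg[\binom{2n-1}{n-k}-\binom{2n-1}{n-k-1}\bigg], \] where $v_2(k)$ is the largest $\nu$ such that $2^\nu$ divides $k$, and binomial coefficients with negative lower index are $0$.
   Context: A simple two-dimensional lattice path is a finite nonempty word over the steps $\{\uparrow,\rightarrow,\downarrow,\leftarrow\}$; its length is the number of steps. The reduction $\Phi_L(\ell)$ of a path $\ell$ of length $\ge2$: first, if the first step of $\ell$ is vertical, the entire path is rotated by $90^\circ$ clockwise; then, if the last step is horizontal, this last step alone is rotated by $90^\circ$ clockwise. The resulting path decomposes uniquely as $H_1V_1\cdots H_kV_k$ ($k\ge1$) with each $H_i$ a nonempty maximal run of horizontal steps and each $V_i$ a nonempty maximal run of vertical steps. Each block $H_iV_i$ is replaced by $\nearrow$, $\searrow$, $\swarrow$, $\nwarrow$ according as ($H_i$ starts with $\rightarrow$, $V_i$ with $\uparrow$), ($\rightarrow$, $\downarrow$), ($\leftarrow$, $\downarrow$), ($\leftarrow$, $\uparrow$); the diagonal path is then rotated by $45^\circ$ clockwise, giving $\Phi_L(\ell)$ of length $k$. The compactification degree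 $\mathrm{cdeg}(\ell)$ of a path of length $\ge1$ is the number $m\ge0$ such that $\Phi_L^m(\ell)$ consists of a single step. *)

theory Defs
  imports Complex_Main "HOL-Computational_Algebra.Primes"
begin

datatype step = U | R | D | L

fun is_horiz :: "step \<Rightarrow> bool" where
  "is_horiz R = True" | "is_horiz L = True" | "is_horiz U = False" | "is_horiz D = False"

abbreviation is_vert :: "step \<Rightarrow> bool" where
  "is_vert s \<equiv> \<not> is_horiz s"

fun rot :: "step \<Rightarrow> step" where
  "rot U = R" | "rot R = D" | "rot D = L" | "rot L = U"

text \<open>Decomposition H1 V1 ... Hk Vk into maximal runs; each block is recorded by the
  pair (first step of H_i, first step of V_i).\<close>
function blocks :: "step list \<Rightarrow> (step \<times> step) list" where
  "blocks [] = []"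
| "blocks (h # t) =
     (case dropWhile is_horiz t of
        [] \<Rightarrow> []
      | v # t' \<Rightarrow> (h, v) # blocks (dropWhile is_vert t'))"
  by pat_completeness auto
termination
proof (relation "measure length")
  fix h t v t'
  assume "dropWhile is_horiz t = v # t'"
  then have "length (v # t') \<le> length t" by (metis length_dropWhile_le)
  then show "(dropWhile is_vert t', h # t) \<in> measure length"
    using length_dropWhile_le[of is_vert t'] by simp
qed auto

text \<open>Block (H_i V_i) to diagonal step, followed by the 45 degree clockwise rotation:
  NE \<mapsto> R, SE \<mapsto> D, SW \<mapsto> L, NW \<mapsto> U.\<close>
fun block_dir :: "step \<times> step \<Rightarrow> step" where
  "block_dir (h, v) =
     (if h = R then (if v = U then R else D) else (if v = D then L else U))"

text \<open>The reduction Phi_L (meaningful for paths of length at least 2).\<close>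
definition PhiL :: "step list \<Rightarrow> step list" where
  "PhiL xs =
     (let ys = (if is_vert (hd xs) then map rot xs else xs);
          zs = (if is_horiz (last ys) then butlast ys @ [rot (last ys)] else ys)
      in map block_dir (blocks zs))"

definition cdeg :: "step list \<Rightarrow> nat" where
  "cdeg xs = (LEAST m. length ((PhiL ^^ m) xs) = 1)"

definition binz :: "nat \<Rightarrow> int \<Rightarrow> nat" where
  "binz m k = (if k < 0 then 0 else m choose nat k)"

end

theory Submission
  imports Defs "HOL-Computational_Algebra.Polynomial"
begin

text \<open>Every path of length \<open>n \<ge> 2\<close> is mapped by \<open>\<Phi>\<^sub>L\<close> onto a path of some length \<open>k\<close>,
  and each path of length \<open>k\<close> has exactly \<open>4 \<cdot> C(n-1, 2k-1) \<cdot> 2^(n-2k)\<close> preimages: four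
  choices undo the normalisation of the first and last step, and the remaining count is that of
  words with a prescribed block decomposition. Hence the number of paths of degree \<open>r\<close> and the
  total degree satisfy linear recurrences in \<open>n\<close>. The ballot numbers
  \<open>b(n, j) = C(2n-1, n+j-1) - C(2n-1, n+j)\<close>, the coefficients of \<open>(x - 1)(x + 1)^(2n-1)\<close>,
  obey the same relation at even indices,
  \<open>4 b(n, 2j) = \<Sum>\<^sub>k 4 C(n-1, 2k-1) 2^(n-2k) b(k, j)\<close>, because
  \<open>(x - 1)(x + 1)^(2n-1) = (x\<^sup>2 - 1)(x\<^sup>2 + 1 + 2x)^(n-1)\<close>. Together with the moments
  \<open>\<Sum>\<^sub>l l (-1)^(l-1) b(n, l) = [n = 1]\<close> and \<open>\<Sum>\<^sub>l l b(n, l) = 4^(n-1)\<close> for the base cases,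
  the closed forms therefore satisfy the recurrences.\<close>

section \<open>Ballot numbers\<close>

definition ballot_poly :: "nat \<Rightarrow> real poly" where
  "ballot_poly n = [:-1, 1:] * [:1, 1:] ^ (2 * n - 1)"

definition ballot :: "nat \<Rightarrow> nat \<Rightarrow> real" where
  "ballot n j = coeff (ballot_poly n) (n + j)"

lemma coeff_one_plus_X_power: "coeff ([:1, 1:] ^ N :: real poly) m = real (N choose m)"
proof (cases "m \<le> N")
  case True
  then show ?thesis using coeff_linear_poly_power[OF True, of 1 1] by simp
next
  case False
  have "degree ([:1, 1:] ^ N :: real poly) \<le> N"
    using degree_power_le[of "[:1, 1:] :: real poly" N] by simp
  then show ?thesis using False by (simp add: coeff_eq_0 binomial_eq_0)
qed

lemma ballot_eq_binomials:
  assumes "n \<ge> 1"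
  shows "ballot n j = real ((2 * n - 1) choose (n + j - 1)) - real ((2 * n - 1) choose (n + j))"
proof -
  obtain m where m: "n + j = Suc m" using assms by (cases "n + j") auto
  show ?thesis
    unfolding ballot_def ballot_poly_def m by (simp add: algebra_simps coeff_one_plus_X_power)
qed

lemma ballot_eq_binz:
  assumes n: "n \<ge> 1"
  shows "ballot n j = real (binz (2 * n - 1) (int n - int j)) - real (binz (2 * n - 1) (int n - int j - 1))"
proof (cases "j < n")
  case True
  have "(2 * n - 1) choose (n + j - 1) = (2 * n - 1) choose (n - j)"
    using binomial_symmetric[of "n + j - 1" "2 * n - 1"] True by (simp add: algebra_simps)
  moreover have "(2 * n - 1) choose (n + j) = (2 * n - 1) choose (n - j - 1)"
    using binomial_symmetric[of "n + j" "2 * n - 1"] True by (simp add: algebra_simps)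
  moreover have "nat (int n - int j) = n - j" "nat (int n - int j - 1) = n - j - 1"
    using True by arith+
  ultimately show ?thesis
    using True by (simp add: ballot_eq_binomials[OF n] binz_def)
next
  case False
  then consider "j = n" | "n < j" by linarith
  then show ?thesis
  proof cases
    case 1
    then have "n + j - 1 = 2 * n - 1" by simp
    then show ?thesis using n 1 by (simp add: ballot_eq_binomials binz_def)
  qed (use n in \<open>simp add: ballot_eq_binomials binz_def binomial_eq_0\<close>)
qed

lemma ballot_0: "n \<ge> 1 \<Longrightarrow> ballot n 0 = 0"
  using binomial_symmetric[of "n - 1" "2 * n - 1"] by (simp add: ballot_eq_binomials)

lemma ballot_eq_0: "n \<ge> 1 \<Longrightarrow> n < j \<Longrightarrow> ballot n j = 0"
  by (simp add: ballot_eq_binomials binomial_eq_0)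

lemma ballot_1_1: "ballot (Suc 0) (Suc 0) = 1"
  by (simp add: ballot_eq_binomials)

lemma ballot_Suc:
  assumes "n \<ge> 1" "j \<ge> 1"
  shows "ballot (Suc n) j = ballot n (j - 1) + 2 * ballot n j + ballot n (j + 1)"
proof -
  obtain m where m: "n + j = Suc (Suc m)" using assms by (cases "n + j"; cases "n + j - 1") auto
  have "2 * Suc n - 1 = Suc (Suc (2 * n - 1))" using assms(1) by simp
  then have "ballot_poly (Suc n) = ballot_poly n * [:1, 1:] * [:1, 1:]"
    unfolding ballot_poly_def by (simp only: power_Suc2 mult.assoc)
  then have "ballot (Suc n) j = coeff (ballot_poly n * [:1, 1:] * [:1, 1:]) (Suc (Suc (Suc m)))"
    unfolding ballot_def using m by simp
  also have "\<dots> = coeff (ballot_poly n) (Suc m) + 2 * coeff (ballot_poly n) (Suc (Suc m))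
      + coeff (ballot_poly n) (Suc (Suc (Suc m)))"
  proof -
    have times_1_plus_X: "coeff (q * [:1, 1:]) (Suc i) = coeff q i + coeff q (Suc i)"
      for q :: "real poly" and i by (simp add: algebra_simps)
    show ?thesis by (simp only: times_1_plus_X)
  qed
  finally show ?thesis
    using m assms unfolding ballot_def by (simp add: numeral_2_eq_2)
qed

lemma sum_ballot_cutoff:
  assumes "n \<ge> 1" "n \<le> K"
  shows "(\<Sum>l\<in>{1..K}. f l * ballot n (l * 2 ^ r)) = (\<Sum>l\<in>{1..n}. f l * ballot n (l * 2 ^ r))"
proof (rule sum.mono_neutral_right)
  show "\<forall>l\<in>{1..K} - {1..n}. f l * ballot n (l * 2 ^ r) = 0"
  proof
    fix l assume "l \<in> {1..K} - {1..n}"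
    then have "n < l" by auto
    moreover have "l \<le> l * 2 ^ r" by simp
    ultimately have "n < l * 2 ^ r" by linarith
    then show "f l * ballot n (l * 2 ^ r) = 0" using ballot_eq_0[OF assms(1)] by simp
  qed
qed (use assms in auto)

lemma sum_ballot_Suc:
  assumes n: "n \<ge> 1" and K: "K > n + 1" and g0: "g 0 = 0"
  shows "(\<Sum>l\<in>{1..K}. g l * ballot (Suc n) l) =
         (\<Sum>l\<in>{1..K}. (g (l + 1) + 2 * g l + g (l - 1)) * ballot n l)"
proof -
  obtain K' where K': "K = Suc K'" using K by (cases K) auto
  have split: "(\<Sum>l\<in>{1..K}. g l * ballot (Suc n) l) =
        (\<Sum>l\<in>{1..K}. g l * ballot n (l - 1)) + (\<Sum>l\<in>{1..K}. 2 * g l * ballot n l)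
         + (\<Sum>l\<in>{1..K}. g l * ballot n (l + 1))"
    by (simp add: ballot_Suc[OF n] sum.distrib[symmetric] algebra_simps)
  have down: "(\<Sum>l\<in>{1..K}. g l * ballot n (l - 1)) = (\<Sum>l\<in>{1..K}. g (l + 1) * ballot n l)"
  proof -
    have "(\<Sum>l\<in>{1..K}. g l * ballot n (l - 1)) = (\<Sum>l\<in>{0..K'}. g (Suc l) * ballot n l)"
      unfolding K' using sum.shift_bounds_cl_Suc_ivl[of "\<lambda>l. g l * ballot n (l - 1)" 0 K'] by simp
    also have "\<dots> = (\<Sum>l\<in>{1..K'}. g (Suc l) * ballot n l)"
      using sum.atLeast_Suc_atMost[of 0 K' "\<lambda>l. g (Suc l) * ballot n l"] ballot_0[OF n] by simp
    also have "\<dots> = (\<Sum>l\<in>{1..K}. g (l + 1) * ballot n l)"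
      unfolding K' using ballot_eq_0[OF n, of "Suc K'"] K K' by simp
    finally show ?thesis .
  qed
  have up: "(\<Sum>l\<in>{1..K}. g l * ballot n (l + 1)) = (\<Sum>l\<in>{1..K}. g (l - 1) * ballot n l)"
  proof -
    have "(\<Sum>l\<in>{1..K}. g (l - 1) * ballot n l) = (\<Sum>l\<in>{Suc 1..K}. g (l - 1) * ballot n l)"
      using sum.atLeast_Suc_atMost[of 1 K "\<lambda>l. g (l - 1) * ballot n l"] K g0 by simp
    also have "\<dots> = (\<Sum>l\<in>{1..K'}. g l * ballot n (Suc l))"
      unfolding K' using sum.shift_bounds_cl_Suc_ivl[of "\<lambda>l. g (l - 1) * ballot n l" 1 K'] by simp
    also have "\<dots> = (\<Sum>l\<in>{1..K}. g l * ballot n (l + 1))"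
      unfolding K' using ballot_eq_0[OF n, of "Suc (Suc K')"] K K' by simp
    finally show ?thesis by simp
  qed
  show ?thesis unfolding split down up
    by (simp add: sum.distrib[symmetric] algebra_simps)
qed

lemma ballot_alternating_moment:
  assumes "n \<ge> 1"
  shows "(\<Sum>l\<in>{1..n}. real l * (-1) ^ (l - 1) * ballot n l) = (if n = 1 then 1 else 0)"
proof (cases "n = 1")
  case True
  then show ?thesis by (simp add: ballot_1_1)
next
  case False
  then obtain m where m: "n = Suc m" "m \<ge> 1" using assms by (cases n) auto
  let ?g = "\<lambda>l::nat. real l * (-1) ^ (l - 1)"
  have "(\<Sum>l\<in>{1..n}. ?g l * ballot n l) = (\<Sum>l\<in>{1..n + 1}. ?g l * ballot n l)"
    using sum_ballot_cutoff[OF assms, of "n + 1" ?g 0] by simp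
  also have "\<dots> = (\<Sum>l\<in>{1..n + 1}. (?g (l + 1) + 2 * ?g l + ?g (l - 1)) * ballot m l)"
    unfolding m(1) by (rule sum_ballot_Suc) (use m in auto)
  also have "\<dots> = 0"
  proof (rule sum.neutral, intro ballI)
    fix l assume "l \<in> {1..n + 1}"
    then obtain t where t: "l = Suc t" by (cases l) auto
    show "(?g (l + 1) + 2 * ?g l + ?g (l - 1)) * ballot m l = 0"
      unfolding t by (cases t) (auto simp: algebra_simps)
  qed
  finally show ?thesis using False by simp
qed

lemma ballot_first_moment:
  assumes "n \<ge> 1"
  shows "(\<Sum>l\<in>{1..n}. real l * ballot n l) = 4 ^ (n - 1)"
  using assms
proof (induction n rule: dec_induct)
  case base
  then show ?case by (simp add: ballot_1_1)
next
  case (step m)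
  have "(\<Sum>l\<in>{1..Suc m}. real l * ballot (Suc m) l) = (\<Sum>l\<in>{1..m + 2}. real l * ballot (Suc m) l)"
    using sum_ballot_cutoff[of "Suc m" "m + 2" real 0] by simp
  also have "\<dots> = (\<Sum>l\<in>{1..m + 2}. (real (l + 1) + 2 * real l + real (l - 1)) * ballot m l)"
    by (rule sum_ballot_Suc) (use step in auto)
  also have "\<dots> = 4 * (\<Sum>l\<in>{1..m + 2}. real l * ballot m l)"
    unfolding sum_distrib_left by (rule sum.cong) (auto simp: algebra_simps)
  also have "\<dots> = 4 * 4 ^ (m - 1)"
    using sum_ballot_cutoff[OF step(1), of "m + 2" real 0] step by simp
  finally show ?case using step(1) by (simp add: power_eq_if)
qed

definition choose_pow2 :: "nat \<Rightarrow> nat \<Rightarrow> nat" where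
  "choose_pow2 N m = (N choose m) * 2 ^ (N - m)"

text \<open>The number of paths of length \<open>n\<close> that \<open>PhiL\<close> maps onto a fixed path of length \<open>k\<close>.\<close>

definition reduction_weight :: "nat \<Rightarrow> nat \<Rightarrow> real" where
  "reduction_weight n k = 4 * real (choose_pow2 (n - 1) (2 * k - 1))"

lemma coeff_pcompose_X2:
  "coeff (pcompose p [:0, 0, 1:]) m = (if even m then coeff p (m div 2) else (0 :: real))"
proof (induction p arbitrary: m rule: pCons_induct)
  case 0
  then show ?case by simp
next
  case (pCons a p)
  have e: "pcompose (pCons a p) [:0, 0, 1:] = [:a:] + pCons 0 (pCons 0 (pcompose p [:0, 0, 1:]))"
    by (simp add: pcompose_pCons smult_one)
  show ?case
  proof (cases m)
    case (Suc m')
    show ?thesis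
    proof (cases m')
      case (Suc m'')
      then show ?thesis using \<open>m = Suc m'\<close> pCons.IH[of m''] by (cases "even m''") (auto simp: e)
    qed (use Suc in \<open>simp add: e\<close>)
  qed (simp add: e)
qed

lemma pcompose_power: "pcompose (p ^ k) q = pcompose p q ^ k"
  by (induction k) (simp_all add: pcompose_mult pcompose_1)

lemma ballot_poly_expansion:
  assumes "n \<ge> 1"
  shows "ballot_poly n = (\<Sum>i\<le>n - 1. of_nat ((n - 1) choose i)
           * pcompose ([:-1, 1:] * [:1, 1:] ^ i) [:0, 0, 1:] * monom (2 ^ (n - 1 - i)) (n - 1 - i))"
proof -
  have X2: "pcompose [:-1, 1:] [:0, 0, 1:] = ([:-1, 0, 1:] :: real poly)"
           "pcompose [:1, 1:] [:0, 0, 1:] = ([:1, 0, 1:] :: real poly)"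
    by (simp_all add: pcompose_pCons)
  have twoX: "([:0, 2:] :: real poly) ^ e = monom (2 ^ e) e" for e
  proof -
    have "([:0, 2:] :: real poly) = monom 2 1" by (simp add: monom_Suc monom_0)
    then show ?thesis by (simp add: monom_power)
  qed
  have "2 * n - 1 = Suc (2 * (n - 1))" using assms by simp
  then have "ballot_poly n = ([:-1, 1:] * [:1, 1:]) * ([:1, 1:] * [:1, 1:]) ^ (n - 1)"
    unfolding ballot_poly_def by (simp only: power_Suc power_mult mult.assoc power2_eq_square)
  also have "[:-1, 1:] * [:1, 1:] = ([:-1, 0, 1:] :: real poly)" by simp
  also have "[:1, 1:] * [:1, 1:] = ([:1, 0, 1:] + [:0, 2:] :: real poly)" by simp
  also have "([:1, 0, 1:] + [:0, 2:] :: real poly) ^ (n - 1) =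
       (\<Sum>i\<le>n - 1. of_nat ((n - 1) choose i) * [:1, 0, 1:] ^ i * [:0, 2:] ^ (n - 1 - i))"
    by (rule binomial_ring)
  finally show ?thesis
    unfolding pcompose_mult pcompose_power X2 by (simp add: twoX sum_distrib_left algebra_simps)
qed

text \<open>Only the terms with an odd power \<open>2k - 1\<close> of \<open>x\<^sup>2 + 1\<close> reach the coefficient of
  \<open>x^(n+2j)\<close>, and \<open>(x\<^sup>2 - 1)(x\<^sup>2 + 1)^(2k-1)\<close> is \<open>ballot_poly k\<close> evaluated at \<open>x\<^sup>2\<close>.\<close>

lemma ballot_double:
  assumes n: "n \<ge> 1"
  shows "4 * ballot n (2 * j) = (\<Sum>k\<in>{1..n}. reduction_weight n k * ballot k j)"
proof -
  define m where "m = n - 1"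
  define F where "F i = real (choose_pow2 m i)
    * coeff (pcompose ([:-1, 1:] * [:1, 1:] ^ i) [:0, 0, 1:]) (2 * j + 1 + i)" for i
  have "ballot n (2 * j) = (\<Sum>i\<le>m. F i)"
    unfolding ballot_def ballot_poly_expansion[OF n] coeff_sum m_def[symmetric]
  proof (rule sum.cong[OF refl])
    fix i assume i: "i \<in> {..m}"
    have "n + 2 * j = (2 * j + 1 + i) + (m - i)" using i n unfolding m_def by auto
    then show "coeff (of_nat (m choose i) * pcompose ([:-1, 1:] * [:1, 1:] ^ i) [:0, 0, 1:]
        * monom (2 ^ (m - i)) (m - i)) (n + 2 * j) = F i"
      unfolding F_def choose_pow2_def
      by (simp add: mult.commute[of _ "monom _ _"] coeff_monom_mult of_nat_poly add_ac)
  qed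
  also have "\<dots> = (\<Sum>i\<in>{i. i \<le> m \<and> odd i}. F i)"
    by (rule sum.mono_neutral_right) (auto simp: F_def coeff_pcompose_X2)
  also have "\<dots> = (\<Sum>k\<in>{k. k \<in> {1..n} \<and> 2 * k - 1 \<le> m}. F (2 * k - 1))"
  proof (rule sum.reindex_cong[where l = "\<lambda>k. 2 * k - 1"])
    show "inj_on (\<lambda>k::nat. 2 * k - 1) {k. k \<in> {1..n} \<and> 2 * k - 1 \<le> m}"
      by (auto simp: inj_on_def)
    show "{i. i \<le> m \<and> odd i} = (\<lambda>k. 2 * k - 1) ` {k. k \<in> {1..n} \<and> 2 * k - 1 \<le> m}"
    proof (intro equalityI subsetI)
      fix i assume "i \<in> {i. i \<le> m \<and> odd i}"
      then obtain t where "i = 2 * t + 1" "i \<le> m" by (auto elim: oddE)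
      then show "i \<in> (\<lambda>k. 2 * k - 1) ` {k. k \<in> {1..n} \<and> 2 * k - 1 \<le> m}"
        unfolding m_def by (intro image_eqI[of _ _ "t + 1"]) auto
    qed auto
  qed simp
  also have "\<dots> = (\<Sum>k\<in>{1..n}. real (choose_pow2 m (2 * k - 1)) * ballot k j)"
  proof (rule sum.mono_neutral_cong_left)
    fix k assume k: "k \<in> {k. k \<in> {1..n} \<and> 2 * k - 1 \<le> m}"
    then have "even (2 * j + 1 + (2 * k - 1))" "(2 * j + 1 + (2 * k - 1)) div 2 = k + j" by auto
    then show "F (2 * k - 1) = real (choose_pow2 m (2 * k - 1)) * ballot k j"
      unfolding F_def coeff_pcompose_X2 ballot_def ballot_poly_def by (simp add: add_ac)
  qed (auto simp: m_def choose_pow2_def binomial_eq_0)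
  finally show ?thesis
    unfolding m_def reduction_weight_def by (simp add: sum_distrib_left mult.assoc)
qed

lemma sum_ballot_double:
  assumes "n \<ge> 1"
  shows "4 * (\<Sum>j\<in>J. f j * ballot n (2 * h j)) =
         (\<Sum>k\<in>{1..n}. reduction_weight n k * (\<Sum>j\<in>J. f j * ballot k (h j)))"
proof -
  have "4 * (\<Sum>j\<in>J. f j * ballot n (2 * h j)) = (\<Sum>j\<in>J. f j * (4 * ballot n (2 * h j)))"
    by (simp add: sum_distrib_left mult_ac)
  also have "\<dots> = (\<Sum>j\<in>J. \<Sum>k\<in>{1..n}. f j * (reduction_weight n k * ballot k (h j)))"
    by (simp add: ballot_double[OF assms] sum_distrib_left)
  also have "\<dots> = (\<Sum>k\<in>{1..n}. reduction_weight n k * (\<Sum>j\<in>J. f j * ballot k (h j)))"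
    by (subst sum.swap) (simp add: sum_distrib_left mult_ac)
  finally show ?thesis .
qed

section \<open>Paths with a prescribed block decomposition\<close>

lemma choose_pow2_Suc_Suc: "choose_pow2 (Suc N) (Suc m) = 2 * choose_pow2 N (Suc m) + choose_pow2 N m"
proof (cases "Suc m \<le> N")
  case True
  then have "N - m = Suc (N - Suc m)" by simp
  then have "2 ^ (N - m) = 2 * (2::nat) ^ (N - Suc m)" by simp
  then show ?thesis using True unfolding choose_pow2_def by (simp add: algebra_simps)
next
  case False
  then show ?thesis unfolding choose_pow2_def by (cases "m = N") (auto simp: binomial_eq_0)
qed

lemma choose_pow2_Suc_0: "choose_pow2 (Suc N) 0 = 2 * choose_pow2 N 0"
  by (simp add: choose_pow2_def)

lemma UNIV_step: "(UNIV :: step set) = {U, R, D, L}"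
  using step.exhaust by auto

instance step :: finite
  by standard (simp add: UNIV_step)

lemma finite_paths: "finite {xs :: step list. length xs = n}"
  using finite_lists_length_eq[of "UNIV :: step set" n] by simp

lemma card_UNIV_step: "card (UNIV :: step set) = 4"
  by (simp add: UNIV_step)

lemma card_paths: "card {xs :: step list. length xs = n} = 4 ^ n"
  using card_lists_length_eq[of "UNIV :: step set" n] by (simp add: card_UNIV_step)

lemma is_horiz_iff: "is_horiz s \<longleftrightarrow> s = R \<or> s = L"
  by (cases s) auto

lemma blocks_Cons_horiz:
  assumes "is_horiz a"
  shows "blocks (s # a # t) = (case blocks (a # t) of [] \<Rightarrow> [] | p # r \<Rightarrow> (s, snd p) # r)"
proof -
  have d: "dropWhile is_horiz (a # t) = dropWhile is_horiz t" using assms by simp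
  show ?thesis
    by (cases "dropWhile is_horiz t") (simp_all only: blocks.simps d list.case snd_conv)
qed

lemma blocks_Cons_vert: "is_vert a \<Longrightarrow> blocks (s # a # t) = (s, a) # blocks (dropWhile is_vert t)"
  by simp

lemma fst_hd_blocks: "blocks (a # t) = p # r \<Longrightarrow> fst p = a"
  by (auto split: list.splits)

definition hv_pairs :: "(step \<times> step) list \<Rightarrow> bool" where
  "hv_pairs ps \<longleftrightarrow> (\<forall>p\<in>set ps. is_horiz (fst p) \<and> is_vert (snd p))"

lemma hv_pairs_blocks: "z = [] \<or> is_horiz (hd z) \<Longrightarrow> hv_pairs (blocks z)"
proof (induction z rule: blocks.induct)
  case (2 h t)
  show ?case
  proof (cases "dropWhile is_horiz t")
    case (Cons v t')
    have "is_vert v" using Cons by (metis dropWhile_eq_Cons_conv)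
    moreover have "dropWhile is_vert t' = [] \<or> is_horiz (hd (dropWhile is_vert t'))"
      by (metis hd_dropWhile)
    ultimately show ?thesis using 2 Cons by (auto simp: hv_pairs_def)
  qed (simp only: blocks.simps list.case, simp add: hv_pairs_def)
qed (simp add: hv_pairs_def)

lemma length_blocks: "2 * length (blocks z) \<le> length z"
proof (induction z rule: blocks.induct)
  case (2 h t)
  show ?case
  proof (cases "dropWhile is_horiz t")
    case (Cons v t')
    have "length (v # t') \<le> length t" by (metis Cons length_dropWhile_le)
    moreover have "length (dropWhile is_vert t') \<le> length t'" by (rule length_dropWhile_le)
    ultimately show ?thesis using 2 Cons by auto
  qed (simp only: blocks.simps list.case, simp)
qed simp

lemma blocks_neq_Nil:
  assumes "z \<noteq> []" "is_horiz (hd z)" "is_vert (last z)"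
  shows "blocks z \<noteq> []"
proof -
  obtain h t where z: "z = h # t" using assms(1) by (cases z) auto
  show ?thesis
  proof (cases "dropWhile is_horiz t")
    case Nil
    then have "\<forall>x\<in>set t. is_horiz x" by (simp add: dropWhile_eq_Nil_conv)
    then show ?thesis using assms z by (cases t rule: rev_cases) auto
  qed (simp add: z)
qed

definition hpaths :: "nat \<Rightarrow> (step \<times> step) list \<Rightarrow> step list set" where
  "hpaths n ps = {z. length z = n \<and> z \<noteq> [] \<and> is_horiz (hd z) \<and> is_vert (last z) \<and> blocks z = ps}"

definition vpaths :: "nat \<Rightarrow> step \<Rightarrow> (step \<times> step) list \<Rightarrow> step list set" where
  "vpaths n v ps =
     {z. length z = n \<and> z \<noteq> [] \<and> hd z = v \<and> is_vert (last z) \<and> blocks (dropWhile is_vert z) = ps}"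

lemma finite_hpaths: "finite (hpaths n ps)"
  by (rule finite_subset[OF _ finite_paths[of n]]) (auto simp: hpaths_def)

lemma finite_vpaths: "finite (vpaths n v ps)"
  by (rule finite_subset[OF _ finite_paths[of n]]) (auto simp: vpaths_def)

lemma hpaths_Nil: "hpaths n [] = {}"
  unfolding hpaths_def using blocks_neq_Nil by auto

lemma hpaths_Suc:
  assumes n: "n \<ge> 1" and h: "is_horiz h" and v: "is_vert v"
  shows "hpaths (Suc n) ((h, v) # ps) =
           Cons h ` (hpaths n ((R, v) # ps) \<union> hpaths n ((L, v) # ps) \<union> vpaths n v ps)"
proof (intro equalityI subsetI)
  fix z assume "z \<in> hpaths (Suc n) ((h, v) # ps)"
  then have z: "length z = Suc n" "is_horiz (hd z)" "is_vert (last z)" "blocks z = (h, v) # ps"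
    unfolding hpaths_def by auto
  then obtain s a t where zz: "z = s # a # t" using n by (cases z; cases "tl z") auto
  have s: "s = h" using fst_hd_blocks[of s "a # t"] z(4) zz by simp
  show "z \<in> Cons h ` (hpaths n ((R, v) # ps) \<union> hpaths n ((L, v) # ps) \<union> vpaths n v ps)"
  proof (cases "is_horiz a")
    case True
    have last_vert: "is_vert (last (a # t))" using z(3) zz by simp
    then obtain p r where pr: "blocks (a # t) = p # r"
      using blocks_neq_Nil[of "a # t"] True by (cases "blocks (a # t)") auto
    have "snd p = v" "r = ps" using z(4) pr unfolding zz blocks_Cons_horiz[OF True] by auto
    then have "blocks (a # t) = (a, v) # ps" using pr fst_hd_blocks[OF pr] by (cases p) auto
    then have "a # t \<in> hpaths n ((R, v) # ps) \<union> hpaths n ((L, v) # ps)"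
      using z(1) zz last_vert True unfolding hpaths_def is_horiz_iff by auto
    then show ?thesis using zz s by blast
  next
    case False
    have "a = v" "blocks (dropWhile is_vert t) = ps" using z(4) unfolding zz blocks_Cons_vert[OF False] by auto
    then have "a # t \<in> vpaths n v ps" using z(1,3) zz False unfolding vpaths_def by auto
    then show ?thesis using zz s by blast
  qed
next
  fix z assume "z \<in> Cons h ` (hpaths n ((R, v) # ps) \<union> hpaths n ((L, v) # ps) \<union> vpaths n v ps)"
  then obtain z' where zz: "z = h # z'"
    and z': "z' \<in> hpaths n ((R, v) # ps) \<union> hpaths n ((L, v) # ps) \<union> vpaths n v ps" by auto
  then have z'_shape: "z' \<noteq> []" "length z' = n" "is_vert (last z')"
    unfolding hpaths_def vpaths_def by auto
  then obtain a t where at: "z' = a # t" by (cases z') auto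
  have "blocks z = (h, v) # ps"
  proof (cases "is_horiz a")
    case True
    then have "z' \<notin> vpaths n v ps" using at v unfolding vpaths_def by auto
    then have "blocks (a # t) = (R, v) # ps \<or> blocks (a # t) = (L, v) # ps"
      using z' at unfolding hpaths_def by auto
    then show ?thesis unfolding zz at blocks_Cons_horiz[OF True] by auto
  next
    case False
    then have "z' \<notin> hpaths n ((R, v) # ps) \<union> hpaths n ((L, v) # ps)"
      using False at unfolding hpaths_def by auto
    with z' have "z' \<in> vpaths n v ps" by blast
    then have "a = v" "blocks (dropWhile is_vert t) = ps" using at False unfolding vpaths_def by auto
    then show ?thesis unfolding zz at blocks_Cons_vert[OF False] by simp
  qed
  then show "z \<in> hpaths (Suc n) ((h, v) # ps)"
    unfolding hpaths_def using zz h z'_shape by auto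
qed

lemma vpaths_Suc:
  assumes n: "n \<ge> 1" and v: "is_vert v"
  shows "vpaths (Suc n) v ps = Cons v ` (vpaths n U ps \<union> vpaths n D ps \<union> hpaths n ps)"
proof (intro equalityI subsetI)
  fix z assume "z \<in> vpaths (Suc n) v ps"
  then have z: "length z = Suc n" "hd z = v" "is_vert (last z)" "blocks (dropWhile is_vert z) = ps"
    unfolding vpaths_def by auto
  then obtain a t where zz: "z = v # a # t" using n by (cases z; cases "tl z") auto
  have "a # t \<in> vpaths n U ps \<union> vpaths n D ps \<union> hpaths n ps"
  proof (cases "is_horiz a")
    case True
    then show ?thesis using z zz v unfolding hpaths_def by auto
  next
    case False
    then have "a = U \<or> a = D" by (cases a) auto
    then show ?thesis using z zz v False unfolding vpaths_def by auto
  qed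
  then show "z \<in> Cons v ` (vpaths n U ps \<union> vpaths n D ps \<union> hpaths n ps)" using zz by blast
next
  fix z assume "z \<in> Cons v ` (vpaths n U ps \<union> vpaths n D ps \<union> hpaths n ps)"
  then obtain z' where zz: "z = v # z'" and z': "z' \<in> vpaths n U ps \<union> vpaths n D ps \<union> hpaths n ps"
    by auto
  then have z'_shape: "z' \<noteq> []" "length z' = n" "is_vert (last z')"
    unfolding hpaths_def vpaths_def by auto
  then obtain a t where at: "z' = a # t" by (cases z') auto
  have "blocks (dropWhile is_vert z) = ps"
  proof (cases "is_horiz a")
    case True
    then have "z' \<in> hpaths n ps" using z' at unfolding vpaths_def by auto
    then show ?thesis using v True unfolding zz at hpaths_def by simp
  next
    case False
    then have "z' \<in> vpaths n U ps \<union> vpaths n D ps" using z' at unfolding hpaths_def by auto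
    then show ?thesis using v False unfolding zz at vpaths_def by auto
  qed
  then show "z \<in> vpaths (Suc n) v ps" unfolding vpaths_def using zz z'_shape by auto
qed

lemma card_image_Cons: "card (Cons x ` A) = card A"
  by (rule card_image) (simp add: inj_on_def)

lemma card_hpaths_Suc:
  assumes "n \<ge> 1" "is_horiz h" "is_vert v"
  shows "card (hpaths (Suc n) ((h, v) # ps)) =
           card (hpaths n ((R, v) # ps)) + card (hpaths n ((L, v) # ps)) + card (vpaths n v ps)"
proof -
  have "hpaths n ((R, v) # ps) \<inter> hpaths n ((L, v) # ps) = {}"
       "(hpaths n ((R, v) # ps) \<union> hpaths n ((L, v) # ps)) \<inter> vpaths n v ps = {}"
    using assms(3) unfolding hpaths_def vpaths_def by auto
  then show ?thesis
    unfolding hpaths_Suc[OF assms] card_image_Cons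
    by (simp add: card_Un_disjoint finite_hpaths finite_vpaths)
qed

lemma card_vpaths_Suc:
  assumes "n \<ge> 1" "is_vert v"
  shows "card (vpaths (Suc n) v ps) = card (vpaths n U ps) + card (vpaths n D ps) + card (hpaths n ps)"
proof -
  have "vpaths n U ps \<inter> vpaths n D ps = {}" "(vpaths n U ps \<union> vpaths n D ps) \<inter> hpaths n ps = {}"
    unfolding hpaths_def vpaths_def by auto
  then show ?thesis
    unfolding vpaths_Suc[OF assms] card_image_Cons
    by (simp add: card_Un_disjoint finite_hpaths finite_vpaths)
qed

lemma card_hpaths_vpaths:
  assumes "n \<ge> 1" "hv_pairs ps" "is_vert v"
  shows "card (hpaths n ps) = (if ps = [] then 0 else choose_pow2 (n - 1) (2 * length ps - 1))"
    and "card (vpaths n v ps) = choose_pow2 (n - 1) (2 * length ps)"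
  using assms
proof (induction n arbitrary: ps v rule: dec_induct)
  case base
  {
    case 1
    have "hpaths 1 ps = {}" unfolding hpaths_def by (auto simp: length_Suc_conv)
    then show ?case by (cases ps) (auto simp: choose_pow2_def)
  next
    case 2
    have "vpaths 1 v ps = (if ps = [] then {[v]} else {})"
      using 2 unfolding vpaths_def by (auto simp: length_Suc_conv)
    then show ?case by (auto simp: choose_pow2_def)
  }
next
  case (step n)
  {
    case 1
    show ?case
    proof (cases ps)
      case (Cons p ps')
      obtain h v' where p: "p = (h, v')" by (cases p)
      have hv: "is_horiz h" "is_vert v'" "hv_pairs ps'"
        using 1 Cons p unfolding hv_pairs_def by auto
      show ?thesis
        using step.IH(1)[of "(R, v') # ps'"] step.IH(1)[of "(L, v') # ps'"] step.IH(2)[of ps' v']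
          choose_pow2_Suc_Suc[of "n - 1" "2 * length ps'"] step.hyps hv
        unfolding Cons p card_hpaths_Suc[OF step.hyps(1) hv(1,2)] by (simp add: hv_pairs_def)
    qed (simp add: hpaths_Nil)
  next
    case 2
    then show ?case
      using step.IH(1)[of ps] step.IH(2)[of ps U] step.IH(2)[of ps D] step.hyps
        choose_pow2_Suc_0[of "n - 1"] choose_pow2_Suc_Suc[of "n - 1" "2 * length ps - 1"]
      unfolding card_vpaths_Suc[OF step.hyps(1) 2(2)] by (cases ps) auto
  }
qed

section \<open>The fibres of the reduction\<close>

fun rot_inv :: "step \<Rightarrow> step" where
  "rot_inv U = L" | "rot_inv R = U" | "rot_inv D = R" | "rot_inv L = D"

lemma rot_rot_inv [simp]: "rot (rot_inv s) = s"
  by (cases s) auto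

lemma rot_inv_rot [simp]: "rot_inv (rot s) = s"
  by (cases s) auto

lemma rot_comp_rot_inv [simp]: "rot \<circ> rot_inv = id"
  by auto

lemma rot_inv_comp_rot [simp]: "rot_inv \<circ> rot = id"
  by auto

lemma is_horiz_rot_inv [simp]: "is_horiz (rot_inv s) \<longleftrightarrow> is_vert s"
  by (cases s) auto

lemma is_horiz_rot [simp]: "is_horiz (rot s) \<longleftrightarrow> is_vert s"
  by (cases s) auto

definition normalise :: "step list \<Rightarrow> step list" where
  "normalise xs =
     (let ys = (if is_vert (hd xs) then map rot xs else xs)
      in if is_horiz (last ys) then butlast ys @ [rot (last ys)] else ys)"

definition normal_path :: "nat \<Rightarrow> step list \<Rightarrow> bool" where
  "normal_path n z \<longleftrightarrow> length z = n \<and> z \<noteq> [] \<and> is_horiz (hd z) \<and> is_vert (last z)"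

lemma PhiL_eq_normalise: "PhiL xs = map block_dir (blocks (normalise xs))"
  unfolding PhiL_def normalise_def Let_def by simp

lemma hd_butlast_snoc: "length z \<ge> 2 \<Longrightarrow> hd (butlast z @ [x]) = hd z"
  by (cases z; cases "tl z") auto

lemma normal_path_normalise:
  assumes "length xs = n" "n \<ge> 2"
  shows "normal_path n (normalise xs)"
proof -
  define ys where "ys = (if is_vert (hd xs) then map rot xs else xs)"
  have ys: "length ys = n" "is_horiz (hd ys)"
    using assms unfolding ys_def by (cases xs; auto)+
  have "normalise xs = (if is_horiz (last ys) then butlast ys @ [rot (last ys)] else ys)"
    unfolding normalise_def ys_def Let_def by simp
  then show ?thesis unfolding normal_path_def using ys assms by (auto simp: hd_butlast_snoc)
qed

text \<open>The four preimages: \<open>z\<close>, \<open>z\<close> with its last step rotated back, and the counterclockwise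
  rotations of both.\<close>

lemma card_normalise_fibre:
  assumes n: "n \<ge> 2" and z: "normal_path n z"
  shows "card {xs. length xs = n \<and> normalise xs = z} = 4"
proof -
  define y where "y = butlast z @ [rot_inv (last z)]"
  have zl: "length z = n" "z \<noteq> []" "is_horiz (hd z)" "is_vert (last z)"
    using z unfolding normal_path_def by auto
  have y: "length y = n" "hd y = hd z" "last y = rot_inv (last z)" "y \<noteq> []" "butlast y = butlast z"
    using zl n unfolding y_def by (auto simp: hd_butlast_snoc)
  have preimages: "normalise z = z" "normalise y = z"
      "normalise (map rot_inv z) = z" "normalise (map rot_inv y) = z"
    unfolding normalise_def Let_def using zl y by (simp_all add: hd_map)
  have "{xs. length xs = n \<and> normalise xs = z} = {z, y, map rot_inv z, map rot_inv y}"
  proof (intro equalityI subsetI)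
    fix xs assume "xs \<in> {xs. length xs = n \<and> normalise xs = z}"
    then have xs: "length xs = n" "normalise xs = z" by auto
    define ys where "ys = (if is_vert (hd xs) then map rot xs else xs)"
    have x: "xs = ys \<or> xs = map rot_inv ys" unfolding ys_def by auto
    have zys: "z = (if is_horiz (last ys) then butlast ys @ [rot (last ys)] else ys)"
      using xs(2) unfolding normalise_def ys_def Let_def by simp
    have "ys \<noteq> []" using xs n unfolding ys_def by auto
    then have "ys = z \<or> ys = y"
      using zys unfolding y_def by (cases "is_horiz (last ys)") auto
    then show "xs \<in> {z, y, map rot_inv z, map rot_inv y}" using x by auto
  qed (use preimages zl y in auto)
  moreover have "z \<noteq> y" using y(3) zl(4) by (metis is_horiz_rot_inv)
  moreover have "z \<noteq> map rot_inv z" "z \<noteq> map rot_inv y" "y \<noteq> map rot_inv z" "y \<noteq> map rot_inv y"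
    using zl y by (metis hd_map is_horiz_rot_inv list.map_disc_iff)+
  moreover have "map rot_inv z \<noteq> map rot_inv y" using \<open>z \<noteq> y\<close> by (metis map_map list.map_id rot_comp_rot_inv)
  ultimately show ?thesis by simp
qed

fun block_of_dir :: "step \<Rightarrow> step \<times> step" where
  "block_of_dir R = (R, U)" | "block_of_dir D = (R, D)" | "block_of_dir L = (L, D)" | "block_of_dir U = (L, U)"

lemma block_dir_comp_block_of_dir [simp]: "block_dir \<circ> block_of_dir = id"
  by (rule ext, case_tac x) auto

lemma hv_pairs_map_block_of_dir: "hv_pairs (map block_of_dir w)"
proof -
  have "is_horiz (fst (block_of_dir d)) \<and> is_vert (snd (block_of_dir d))" for d
    by (cases d) auto
  then show ?thesis unfolding hv_pairs_def by auto
qed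

lemma map_block_dir_eq_iff:
  "hv_pairs ps \<Longrightarrow> map block_dir ps = w \<longleftrightarrow> ps = map block_of_dir w"
proof (induction ps arbitrary: w)
  case (Cons p ps)
  obtain h v where p: "p = (h, v)" by (cases p)
  have hv: "is_horiz h" "is_vert v" "hv_pairs ps" using Cons.prems p unfolding hv_pairs_def by auto
  have "block_dir (h, v) = d \<longleftrightarrow> (h, v) = block_of_dir d" for d
    using hv by (cases h; cases v; cases d; simp)
  then show ?case using Cons.IH[OF hv(3)] p by (cases w) auto
qed auto

lemma card_PhiL_fibre:
  assumes n: "n \<ge> 2" and w: "w \<noteq> []"
  shows "card {xs. length xs = n \<and> PhiL xs = w} = 4 * choose_pow2 (n - 1) (2 * length w - 1)"
proof -
  let ?S = "hpaths n (map block_of_dir w)"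
  have "{xs. length xs = n \<and> PhiL xs = w} = (\<Union>z\<in>?S. {xs. length xs = n \<and> normalise xs = z})"
  proof (intro equalityI subsetI)
    fix xs assume "xs \<in> {xs. length xs = n \<and> PhiL xs = w}"
    then have xs: "length xs = n" "map block_dir (blocks (normalise xs)) = w"
      by (auto simp: PhiL_eq_normalise)
    have normal: "normal_path n (normalise xs)" using normal_path_normalise[OF xs(1) n] .
    then have "hv_pairs (blocks (normalise xs))" unfolding normal_path_def using hv_pairs_blocks by blast
    then have "blocks (normalise xs) = map block_of_dir w" using xs(2) map_block_dir_eq_iff by blast
    then show "xs \<in> (\<Union>z\<in>?S. {xs. length xs = n \<and> normalise xs = z})"
      using normal xs unfolding hpaths_def normal_path_def by auto
  qed (auto simp: hpaths_def PhiL_eq_normalise)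
  then have "card {xs. length xs = n \<and> PhiL xs = w} = (\<Sum>z\<in>?S. card {xs. length xs = n \<and> normalise xs = z})"
    by (auto simp: finite_hpaths intro!: card_UN_disjoint intro: finite_subset[OF _ finite_paths[of n]])
  also have "\<dots> = 4 * card ?S"
    using card_normalise_fibre[OF n] by (simp add: hpaths_def normal_path_def)
  also have "card ?S = choose_pow2 (n - 1) (2 * length w - 1)"
    using card_hpaths_vpaths(1)[of n _ U] hv_pairs_map_block_of_dir[of w] n w by simp
  finally show ?thesis .
qed

lemma length_PhiL:
  assumes "length xs = n" "n \<ge> 2"
  shows "length (PhiL xs) \<ge> 1" "2 * length (PhiL xs) \<le> n"
proof -
  have "normal_path n (normalise xs)" by (rule normal_path_normalise[OF assms])
  then show "length (PhiL xs) \<ge> 1" "2 * length (PhiL xs) \<le> n"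
    unfolding PhiL_eq_normalise normal_path_def using blocks_neq_Nil length_blocks[of "normalise xs"]
    by (auto simp: Suc_le_eq)
qed

lemma sum_PhiL:
  assumes n: "n \<ge> 2"
  shows "(\<Sum>xs | length xs = n. f (PhiL xs)) =
         (\<Sum>k\<in>{1..n}. reduction_weight n k * (\<Sum>w | length w = k. f w :: real))"
proof -
  let ?W = "\<Union>k\<in>{1..n}. {w :: step list. length w = k}"
  have "PhiL ` {xs. length xs = n} \<subseteq> ?W"
    using length_PhiL n by fastforce
  then have "(\<Sum>xs | length xs = n. f (PhiL xs)) =
        (\<Sum>w\<in>?W. \<Sum>xs | xs \<in> {xs. length xs = n} \<and> PhiL xs = w. f (PhiL xs))"
    by (intro sum.group[symmetric]) (auto simp: finite_paths)
  also have "\<dots> = (\<Sum>w\<in>?W. reduction_weight n (length w) * f w)"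
  proof (rule sum.cong[OF refl])
    fix w assume "w \<in> ?W"
    then have "w \<noteq> []" by auto
    have "(\<Sum>xs | xs \<in> {xs. length xs = n} \<and> PhiL xs = w. f (PhiL xs)) =
          (\<Sum>xs | length xs = n \<and> PhiL xs = w. f w)"
      by (rule sum.cong) auto
    then have "(\<Sum>xs | xs \<in> {xs. length xs = n} \<and> PhiL xs = w. f (PhiL xs)) =
          real (card {xs. length xs = n \<and> PhiL xs = w}) * f w"
      by simp
    then show "(\<Sum>xs | xs \<in> {xs. length xs = n} \<and> PhiL xs = w. f (PhiL xs)) =
          reduction_weight n (length w) * f w"
      using card_PhiL_fibre[OF n \<open>w \<noteq> []\<close>] by (simp add: reduction_weight_def)
  qed
  also have "\<dots> = (\<Sum>k\<in>{1..n}. \<Sum>w | length w = k. reduction_weight n (length w) * f w)"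
    by (rule sum.UNION_disjoint) (auto simp: finite_paths)
  also have "\<dots> = (\<Sum>k\<in>{1..n}. reduction_weight n k * (\<Sum>w | length w = k. f w))"
    by (simp add: sum_distrib_left)
  finally show ?thesis .
qed

section \<open>Distribution and total of the compactification degree\<close>

lemma cdeg_well_defined: "length xs \<ge> 1 \<Longrightarrow> \<exists>m. length ((PhiL ^^ m) xs) = 1"
proof (induction "length xs" arbitrary: xs rule: less_induct)
  case less
  show ?case
  proof (cases "length xs = 1")
    case True
    then show ?thesis by (intro exI[of _ 0]) simp
  next
    case False
    then have n: "length xs \<ge> 2" using less.prems by simp
    have "length (PhiL xs) < length xs" "length (PhiL xs) \<ge> 1"
      using length_PhiL[OF refl n] by auto
    then obtain m where "length ((PhiL ^^ m) (PhiL xs)) = 1" using less.hyps by blast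
    then show ?thesis by (intro exI[of _ "Suc m"]) (simp add: funpow_Suc_right del: funpow.simps)
  qed
qed

lemma cdeg_single: "length xs = 1 \<Longrightarrow> cdeg xs = 0"
  unfolding cdeg_def by simp

lemma cdeg_PhiL:
  assumes "length xs \<ge> 2"
  shows "cdeg xs = Suc (cdeg (PhiL xs))"
proof -
  obtain m where m: "length ((PhiL ^^ m) xs) = 1" using cdeg_well_defined[of xs] assms by auto
  have "cdeg xs = Suc (LEAST k. length ((PhiL ^^ Suc k) xs) = 1)"
    unfolding cdeg_def using assms
    by (intro Least_Suc[where P = "\<lambda>k. length ((PhiL ^^ k) xs) = 1", OF m]) simp
  also have "(\<lambda>k. (PhiL ^^ Suc k) xs) = (\<lambda>k. (PhiL ^^ k) (PhiL xs))"
    by (simp add: funpow_Suc_right del: funpow.simps)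
  finally show ?thesis unfolding cdeg_def by simp
qed

lemma reduction_weight_eq_0:
  assumes "n < 2 * k"
  shows "reduction_weight n k = 0"
proof -
  have "n - 1 < 2 * k - 1" using assms by arith
  then show ?thesis by (simp add: reduction_weight_def choose_pow2_def binomial_eq_0)
qed

lemma sum_reduction_weight_pow4:
  assumes "n \<ge> 2"
  shows "(\<Sum>k\<in>{1..n}. reduction_weight n k * 4 ^ k) = 4 ^ n"
  using sum_PhiL[OF assms, of "\<lambda>_. 1"] by (simp add: card_paths)

definition cdeg_count :: "nat \<Rightarrow> nat \<Rightarrow> real" where
  "cdeg_count n r = real (card {xs. length xs = n \<and> cdeg xs = r})"

lemma cdeg_count_eq_sum: "cdeg_count n r = (\<Sum>xs | length xs = n. of_bool (cdeg xs = r))"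
  by (simp add: cdeg_count_def finite_paths Collect_conj_eq)

lemma cdeg_count_0:
  assumes "n \<ge> 1"
  shows "cdeg_count n 0 = (if n = 1 then 4 else 0)"
proof (cases "n = 1")
  case True
  then have "{xs. length xs = n \<and> cdeg xs = 0} = {xs. length xs = n}" using cdeg_single by auto
  then show ?thesis using True by (simp add: cdeg_count_def card_paths)
next
  case False
  then have empty: "{xs. length xs = n \<and> cdeg xs = 0} = {}" using cdeg_PhiL assms by fastforce
  show ?thesis unfolding cdeg_count_def empty using False by simp
qed

lemma cdeg_count_1_Suc: "cdeg_count 1 (Suc r) = 0"
proof -
  have empty: "{xs. length xs = 1 \<and> cdeg xs = Suc r} = {}" using cdeg_single by auto
  show ?thesis unfolding cdeg_count_def empty by simp
qed

lemma cdeg_count_Suc: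
  assumes "n \<ge> 2"
  shows "cdeg_count n (Suc r) = (\<Sum>k\<in>{1..n}. reduction_weight n k * cdeg_count k r)"
proof -
  have "cdeg_count n (Suc r) = (\<Sum>xs | length xs = n. of_bool (cdeg (PhiL xs) = r))"
    unfolding cdeg_count_eq_sum by (rule sum.cong) (use cdeg_PhiL assms in auto)
  also have "\<dots> = (\<Sum>k\<in>{1..n}. reduction_weight n k * (\<Sum>w | length w = k. of_bool (cdeg w = r)))"
    by (rule sum_PhiL[OF assms])
  finally show ?thesis by (simp only: cdeg_count_eq_sum)
qed

lemma cdeg_count_closed_form:
  assumes "n \<ge> 1"
  shows "cdeg_count n r = 4 ^ (r + 1) * (\<Sum>l\<in>{1..n}. real l * (-1) ^ (l - 1) * ballot n (l * 2 ^ r))"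
  using assms
proof (induction r arbitrary: n)
  case 0
  then show ?case using ballot_alternating_moment[OF 0] cdeg_count_0[OF 0] by simp
next
  case (Suc r)
  let ?g = "\<lambda>l::nat. real l * (-1) ^ (l - 1)"
  show ?case
  proof (cases "n = 1")
    case True
    have "(1::nat) < 2 ^ Suc r" by (rule one_less_power) auto
    then show ?thesis unfolding True cdeg_count_1_Suc using ballot_eq_0[of 1 "2 ^ Suc r"] by simp
  next
    case False
    then have n: "n \<ge> 2" using Suc.prems by simp
    have "cdeg_count n (Suc r) =
        (\<Sum>k\<in>{1..n}. reduction_weight n k * (4 ^ (r + 1) * (\<Sum>l\<in>{1..n}. ?g l * ballot k (l * 2 ^ r))))"
      unfolding cdeg_count_Suc[OF n]
      by (rule sum.cong[OF refl]) (use Suc.IH sum_ballot_cutoff[of _ n ?g r] in auto)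
    also have "\<dots> = 4 ^ (r + 1) * (\<Sum>k\<in>{1..n}. reduction_weight n k * (\<Sum>l\<in>{1..n}. ?g l * ballot k (l * 2 ^ r)))"
      by (simp add: sum_distrib_left mult_ac)
    also have "\<dots> = 4 ^ (r + 1) * (4 * (\<Sum>l\<in>{1..n}. ?g l * ballot n (2 * (l * 2 ^ r))))"
      by (simp only: sum_ballot_double[OF Suc.prems, where J = "{1..n}" and f = ?g and h = "\<lambda>l. l * 2 ^ r"])
    finally show ?thesis by (simp add: mult_ac)
  qed
qed

definition cdeg_total :: "nat \<Rightarrow> real" where
  "cdeg_total n = (\<Sum>xs | length xs = n. real (cdeg xs))"

lemma cdeg_total_1: "cdeg_total 1 = 0"
  unfolding cdeg_total_def using cdeg_single by simp

lemma cdeg_total_Suc: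
  assumes "n \<ge> 2"
  shows "cdeg_total n = 4 ^ n + (\<Sum>k\<in>{1..n}. reduction_weight n k * cdeg_total k)"
proof -
  have "cdeg_total n = (\<Sum>xs | length xs = n. 1 + real (cdeg (PhiL xs)))"
    unfolding cdeg_total_def by (rule sum.cong) (use cdeg_PhiL assms in auto)
  also have "\<dots> = 4 ^ n + (\<Sum>xs | length xs = n. real (cdeg (PhiL xs)))"
    by (simp add: sum.distrib card_paths)
  also have "(\<Sum>xs | length xs = n. real (cdeg (PhiL xs))) =
      (\<Sum>k\<in>{1..n}. reduction_weight n k * cdeg_total k)"
    unfolding cdeg_total_def by (rule sum_PhiL[OF assms])
  finally show ?thesis .
qed

definition cdeg_weight :: "nat \<Rightarrow> real" where
  "cdeg_weight k = 8 * real k * (2 ^ multiplicity (2::nat) k - 1)"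

lemma cdeg_weight_odd: "odd k \<Longrightarrow> cdeg_weight k = 0"
  unfolding cdeg_weight_def by (simp add: not_dvd_imp_multiplicity_0)

lemma cdeg_weight_double:
  assumes "j \<ge> 1"
  shows "cdeg_weight (2 * j) = 4 * cdeg_weight j + 16 * real j"
proof -
  have "multiplicity (2::nat) (2 * j) = Suc (multiplicity 2 j)"
    using assms by (intro multiplicity_times_same) auto
  then show ?thesis unfolding cdeg_weight_def by (simp add: algebra_simps)
qed

lemma sum_cdeg_weight_ballot_Suc:
  assumes n: "n \<ge> 2"
  shows "(\<Sum>k\<in>{1..n}. cdeg_weight k * ballot n k) =
           4 ^ n + (\<Sum>k\<in>{1..n}. reduction_weight n k * (\<Sum>j\<in>{1..k}. cdeg_weight j * ballot k j))"
proof -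
  have n1: "n \<ge> 1" using n by simp
  have w0: "cdeg_weight 0 = 0" by (simp add: cdeg_weight_def)
  have "(\<Sum>k\<in>{1..n}. cdeg_weight k * ballot n k) = (\<Sum>k\<in>{2 * 0..Suc (2 * n)}. cdeg_weight k * ballot n k)"
    using sum_ballot_cutoff[OF n1, of "Suc (2 * n)" cdeg_weight 0]
    by (simp add: sum.atLeast_Suc_atMost[of 0] w0)
  also have "\<dots> = (\<Sum>j\<in>{0..n}. cdeg_weight (2 * j) * ballot n (2 * j))"
    unfolding sum.in_pairs by (simp add: cdeg_weight_odd)
  also have "\<dots> = (\<Sum>j\<in>{1..n}. cdeg_weight (2 * j) * ballot n (2 * j))"
    by (simp add: sum.atLeast_Suc_atMost[of 0] w0)
  also have "\<dots> = 4 * (\<Sum>j\<in>{1..n}. cdeg_weight j * ballot n (2 * j)) + 4 * (\<Sum>j\<in>{1..n}. 4 * real j * ballot n (2 * j))"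
    unfolding sum_distrib_left sum.distrib[symmetric]
  proof (rule sum.cong[OF refl])
    fix j assume "j \<in> {1..n}"
    then show "cdeg_weight (2 * j) * ballot n (2 * j) =
        4 * (cdeg_weight j * ballot n (2 * j)) + 4 * (4 * real j * ballot n (2 * j))"
      using cdeg_weight_double[of j] by (simp add: algebra_simps)
  qed
  also have "4 * (\<Sum>j\<in>{1..n}. cdeg_weight j * ballot n (2 * j)) =
      (\<Sum>k\<in>{1..n}. reduction_weight n k * (\<Sum>j\<in>{1..k}. cdeg_weight j * ballot k j))"
  proof -
    have "(\<Sum>k\<in>{1..n}. reduction_weight n k * (\<Sum>j\<in>{1..n}. cdeg_weight j * ballot k j)) =
        (\<Sum>k\<in>{1..n}. reduction_weight n k * (\<Sum>j\<in>{1..k}. cdeg_weight j * ballot k j))"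
      by (rule sum.cong[OF refl]) (use sum_ballot_cutoff[of _ n cdeg_weight 0] in auto)
    then show ?thesis
      using sum_ballot_double[OF n1, where J = "{1..n}" and f = cdeg_weight and h = id]
      by simp
  qed
  also have "4 * (\<Sum>j\<in>{1..n}. 4 * real j * ballot n (2 * j)) = (\<Sum>k\<in>{1..n}. reduction_weight n k * 4 ^ k)"
  proof -
    have "(\<Sum>j\<in>{1..n}. 4 * real j * ballot k j) = 4 ^ k" if "k \<in> {1..n}" for k
      using that sum_ballot_cutoff[of k n real 0] ballot_first_moment[of k]
      by (simp add: sum_distrib_left[symmetric] mult.assoc power_eq_if)
    then show ?thesis
      using sum_ballot_double[OF n1, where J = "{1..n}" and f = "\<lambda>j. 4 * real j" and h = id] by simp
  qed
  finally show ?thesis using sum_reduction_weight_pow4[OF n] by simp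
qed

lemma cdeg_total_closed_form: "n \<ge> 1 \<Longrightarrow> cdeg_total n = (\<Sum>k\<in>{1..n}. cdeg_weight k * ballot n k)"
proof (induction n rule: less_induct)
  case (less n)
  show ?case
  proof (cases "n = 1")
    case True
    then show ?thesis using cdeg_total_1 by (simp add: cdeg_weight_def)
  next
    case False
    then have n: "n \<ge> 2" using less.prems by simp
    have "reduction_weight n k * cdeg_total k =
            reduction_weight n k * (\<Sum>j\<in>{1..k}. cdeg_weight j * ballot k j)" if "k \<in> {1..n}" for k
      using less.IH[of k] that reduction_weight_eq_0[of n k] by (cases "2 * k \<le> n") auto
    then show ?thesis
      unfolding cdeg_total_Suc[OF n] sum_cdeg_weight_ballot_Suc[OF n] by (auto intro: sum.cong)
  qed
qed

theorem corollary2: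
  fixes n r :: nat
  assumes "n \<ge> 1"
  shows "(real (card {xs :: step list. length xs = n \<and> cdeg xs = r}) / 4 ^ n
           = 4 powi (int r + 1 - int n) *
             (\<Sum>l = 0..n. real l * (-1) ^ (l - 1) *
                (real (binz (2 * n - 1) (int n - int l * 2 ^ r))
                 - real (binz (2 * n - 1) (int n - int l * 2 ^ r - 1))))) \<and>
         ((\<Sum>xs \<in> {xs :: step list. length xs = n}. real (cdeg xs)) / 4 ^ n
           = (1 / 4 ^ n) *
             (\<Sum>k = 1..n. 8 * real k * (2 ^ multiplicity (2::nat) k - 1) *
                (real (binz (2 * n - 1) (int n - int k))
                 - real (binz (2 * n - 1) (int n - int k - 1)))))"
proof
  have "(\<Sum>l = 0..n. real l * (-1) ^ (l - 1) *
           (real (binz (2 * n - 1) (int n - int l * 2 ^ r))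
            - real (binz (2 * n - 1) (int n - int l * 2 ^ r - 1)))) =
        (\<Sum>l\<in>{1..n}. real l * (-1) ^ (l - 1) * ballot n (l * 2 ^ r))"
    using ballot_eq_binz[OF assms] by (simp add: sum.atLeast_Suc_atMost)
  moreover have "(4::real) powi (int r + 1 - int n) = 4 ^ (r + 1) / 4 ^ n"
  proof -
    have "int r + 1 - int n = int (r + 1) - int n" by simp
    then show ?thesis
      using power_int_diff[of "4::real" "int (r + 1)" "int n"] by (simp only: power_int_of_nat) simp
  qed
  ultimately show "real (card {xs :: step list. length xs = n \<and> cdeg xs = r}) / 4 ^ n
           = 4 powi (int r + 1 - int n) *
             (\<Sum>l = 0..n. real l * (-1) ^ (l - 1) *
                (real (binz (2 * n - 1) (int n - int l * 2 ^ r))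
                 - real (binz (2 * n - 1) (int n - int l * 2 ^ r - 1))))"
    using cdeg_count_closed_form[OF assms, of r] unfolding cdeg_count_def by simp
  have "(\<Sum>k = 1..n. 8 * real k * (2 ^ multiplicity (2::nat) k - 1) *
           (real (binz (2 * n - 1) (int n - int k)) - real (binz (2 * n - 1) (int n - int k - 1)))) =
        (\<Sum>k\<in>{1..n}. cdeg_weight k * ballot n k)"
    by (simp add: cdeg_weight_def ballot_eq_binz[OF assms])
  then show "(\<Sum>xs \<in> {xs :: step list. length xs = n}. real (cdeg xs)) / 4 ^ n
           = (1 / 4 ^ n) *
             (\<Sum>k = 1..n. 8 * real k * (2 ^ multiplicity (2::nat) k - 1) *
                (real (binz (2 * n - 1) (int n - int k))
                 - real (binz (2 * n - 1) (int n - int k - 1))))"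
    using cdeg_total_closed_form[OF assms] unfolding cdeg_total_def by simp
qed

end
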